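(* Let $\pi$ be drawn uniformly at random among all permutations of $[n]$, independently of $\mathbf v\sim\mathcal F$. For every agent $i\in[n]$, every price $p>0$, and every $\alpha>0$, \[ \mathbb{E}_{\mathbf v,\pi}\Big[\min\Big\{\alpha,\sum_{j\in B_\pi(i)}y^*_j(v_j,p)\Big\}\Big]\ \le\ \max\{\alpha,1/2\}\;\mathbb{E}_{\mathbf v,\pi}\Big[\sum_{j\in[n]}y_j(\mathbf v,p,\pi)\Big]. \]
   Context: There are $n$ agents $[n]$ and one divisible item of size $1$. Each agent $i$ has a non-decreasing concave valuation $v_i:[0,1]\to\mathbb{R}_{\ge0}$ drawn independently from a known distribution $\mathcal F_i$; $\mathbf v\sim\mathcal F=\mathcal F_1\times\cdots\times\mathcal F_n$. For a price $p>0$, $y^*_i(v_i,p)\in[0,1]$ denotes a maximizer of $z\mapsto v_i(z)-pz$ over $[0,1]$ (fixed measurable selection). For an ordering $\pi$ of $[n]$, $B_\pi(i)$ is the set of agents acting before $i$ in $\pi$, and $y_i(\mathbf v,p,\pi)=\min\{y^*_i(v_i,p),\max\{0,1-\sum_{j\in B_\pi(i)}y^*_j(v_j,p)\}\}$ is the fraction agent $i$ buys in sequential posted pricing at price $p$ per unit in order $\pi$; in particular $\sum_j y_j(\mathbf v,p,\pi)=\min\{1,\sum_j y^*_j(v_j,p)\}$. *)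

theory Defs
  imports "HOL-Probability.Probability"
begin

text \<open>A valuation: non-decreasing, concave, non-negative function on [0,1]
  (represented as a function real to real, only its values on [0,1] matter).\<close>
definition valuation :: "(real \<Rightarrow> real) \<Rightarrow> bool" where
  "valuation v \<longleftrightarrow> (\<forall>z\<in>{0..1}. v z \<ge> 0) \<and> mono_on {0..1} v \<and> concave_on {0..1} v"

text \<open>Orderings of the agents {..<n}: a bijection sigma, sigma j = position of j.\<close>
definition orderings :: "nat \<Rightarrow> (nat \<Rightarrow> nat) set" where
  "orderings n = {\<sigma>. \<sigma> permutes {..<n}}"

definition before :: "nat \<Rightarrow> (nat \<Rightarrow> nat) \<Rightarrow> nat \<Rightarrow> nat set" where
  "before n \<sigma> i = {j \<in> {..<n}. \<sigma> j < \<sigma> i}"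

definition buy :: "((real \<Rightarrow> real) \<Rightarrow> real \<Rightarrow> real) \<Rightarrow> nat \<Rightarrow> (nat \<Rightarrow> real \<Rightarrow> real)
    \<Rightarrow> real \<Rightarrow> (nat \<Rightarrow> nat) \<Rightarrow> nat \<Rightarrow> real" where
  "buy ystar n v p \<sigma> i =
     min (ystar (v i) p) (max 0 (1 - (\<Sum>j\<in>before n \<sigma> i. ystar (v j) p)))"

end

theory Submission imports Defs begin

text \<open>Whatever the ordering, sequential posted pricing sells exactly
  \<open>min 1 (\<Sum>j. y\<^sup>*\<^sub>j)\<close>. Pair each ordering with its reversal: the agents
  before \<open>i\<close> in the reversed ordering are those after \<open>i\<close> in the original one,
  so the demands \<open>b\<^sub>1, b\<^sub>2\<close> preceding \<open>i\<close> in the two orderings satisfy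
  \<open>b\<^sub>1 + b\<^sub>2 \<le> \<Sum>j. y\<^sup>*\<^sub>j\<close>, and then
  \<open>min \<alpha> b\<^sub>1 + min \<alpha> b\<^sub>2 \<le> 2 max \<alpha> (1/2) min 1 (\<Sum>j. y\<^sup>*\<^sub>j)\<close>.
  Averaging over the uniform ordering gives the inequality for every valuation
  profile, and Fubini integrates it over the profiles.\<close>

lemma sum_buy_prefix:
  fixes x :: "nat \<Rightarrow> real"
  assumes \<sigma>: "\<sigma> permutes {..<n}" and x: "\<And>j. j < n \<Longrightarrow> x j \<ge> 0" and "k \<le> n"
  shows "(\<Sum>j | j < n \<and> \<sigma> j < k. min (x j) (max 0 (1 - (\<Sum>l\<in>before n \<sigma> j. x l))))
         = min 1 (\<Sum>j | j < n \<and> \<sigma> j < k. x j)"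
  using \<open>k \<le> n\<close>
proof (induction k)
  case 0
  then show ?case by simp
next
  case (Suc k)
  define l where "l = inv \<sigma> k"
  have "l < n"
    using permutes_in_image[OF permutes_inv[OF \<sigma>], of k] Suc.prems by (simp add: l_def)
  have "\<sigma> l = k"
    using permutes_inverses(1)[OF \<sigma>] by (simp add: l_def)
  then have prefix_Suc: "{j. j < n \<and> \<sigma> j < Suc k} = insert l {j. j < n \<and> \<sigma> j < k}"
    using \<open>l < n\<close> permutes_inj[OF \<sigma>] by (auto simp: less_Suc_eq dest: injD)
  have before_l: "before n \<sigma> l = {j. j < n \<and> \<sigma> j < k}"
    using \<open>\<sigma> l = k\<close> by (auto simp: before_def)
  have "(\<Sum>j | j < n \<and> \<sigma> j < k. x j) \<ge> 0" "x l \<ge> 0"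
    using x \<open>l < n\<close> by (auto intro: sum_nonneg)
  moreover have "l \<notin> {j. j < n \<and> \<sigma> j < k}"
    using \<open>\<sigma> l = k\<close> by simp
  ultimately show ?case
    unfolding prefix_Suc using Suc before_l by (simp add: min_def max_def)
qed

lemma sum_buy_eq_min:
  assumes \<sigma>: "\<sigma> permutes {..<n}" and demand: "\<And>j. j < n \<Longrightarrow> ystar (v j) p \<ge> 0"
  shows "(\<Sum>j\<in>{..<n}. buy ystar n v p \<sigma> j) = min 1 (\<Sum>j<n. ystar (v j) p)"
proof -
  have "{j. j < n \<and> \<sigma> j < n} = {..<n}"
    using permutes_in_image[OF \<sigma>] by auto
  then show ?thesis
    using sum_buy_prefix[OF \<sigma> demand order.refl] by (simp add: buy_def)
qed

lemma finite_orderings: "finite (orderings n)"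
  using finite_permutations[of "{..<n}"] by (simp add: orderings_def)

lemma orderings_nonempty: "orderings n \<noteq> {}"
  using permutes_id[of "{..<n}"] unfolding orderings_def by blast

definition reverse_order :: "nat \<Rightarrow> nat \<Rightarrow> nat" where
  "reverse_order n k = (if k < n then n - 1 - k else k)"

lemma reverse_order_permutes: "reverse_order n permutes {..<n}"
  by (rule bij_imp_permutes, rule bij_betw_byWitness[where f' = "reverse_order n"])
     (auto simp: reverse_order_def)

lemma reverse_order_involution: "reverse_order n (reverse_order n k) = k"
  by (auto simp: reverse_order_def)

lemma before_reverse_order:
  assumes \<sigma>: "\<sigma> permutes {..<n}" and "i < n"
  shows "before n (reverse_order n \<circ> \<sigma>) i = {j. j < n \<and> \<sigma> i < \<sigma> j}"
proof -
  have "\<And>j. j < n \<Longrightarrow> \<sigma> j < n"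
    using permutes_in_image[OF \<sigma>] by auto
  then show ?thesis
    using \<open>i < n\<close> by (force simp: before_def reverse_order_def)
qed

lemma min_add_min_le:
  fixes a b\<^sub>1 b\<^sub>2 S :: real
  assumes "b\<^sub>1 \<ge> 0" "b\<^sub>2 \<ge> 0" "b\<^sub>1 + b\<^sub>2 \<le> S"
  shows "min a b\<^sub>1 + min a b\<^sub>2 \<le> 2 * (max a (1/2) * min 1 S)"
proof (cases "S \<le> 1")
  case True
  have "1/2 * S \<le> max a (1/2) * S"
    using assms by (intro mult_right_mono) auto
  moreover have "min a b\<^sub>1 + min a b\<^sub>2 \<le> S"
    using min.cobounded2[of a b\<^sub>1] min.cobounded2[of a b\<^sub>2] assms(3) by linarith
  ultimately show ?thesis
    using True by (simp add: min_absorb2)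
next
  case False
  have "min a b\<^sub>1 + min a b\<^sub>2 \<le> 2 * max a (1/2)"
    using min.cobounded1[of a b\<^sub>1] min.cobounded1[of a b\<^sub>2] max.cobounded1[of a "1/2"] by linarith
  then show ?thesis
    using False by (simp add: min_absorb1)
qed

lemma expectation_min_before_le:
  fixes x :: "nat \<Rightarrow> real"
  assumes x: "\<And>j. j < n \<Longrightarrow> x j \<ge> 0" and "i < n"
  shows "(\<integral>\<sigma>. min \<alpha> (\<Sum>j\<in>before n \<sigma> i. x j) \<partial>measure_pmf (pmf_of_set (orderings n)))
         \<le> max \<alpha> (1/2) * min 1 (\<Sum>j<n. x j)"
proof -
  define f where "f \<sigma> = min \<alpha> (\<Sum>j\<in>before n \<sigma> i. x j)" for \<sigma>
  define c where "c = max \<alpha> (1/2) * min 1 (\<Sum>j<n. x j)"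
  have reverse_closed: "reverse_order n \<circ> \<sigma> \<in> orderings n" if "\<sigma> \<in> orderings n" for \<sigma>
    using that permutes_compose reverse_order_permutes by (auto simp: orderings_def)
  have paired: "f \<sigma> + f (reverse_order n \<circ> \<sigma>) \<le> 2 * c" if "\<sigma> \<in> orderings n" for \<sigma>
  proof -
    have \<sigma>: "\<sigma> permutes {..<n}"
      using that by (simp add: orderings_def)
    let ?A = "before n \<sigma> i" and ?B = "{j. j < n \<and> \<sigma> i < \<sigma> j}"
    have "(\<Sum>j\<in>?A. x j) + (\<Sum>j\<in>?B. x j) = (\<Sum>j\<in>?A \<union> ?B. x j)"
      by (rule sum.union_disjoint[symmetric]) (auto simp: before_def)
    also have "\<dots> \<le> (\<Sum>j<n. x j)"
      using x by (intro sum_mono2) (auto simp: before_def)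
    finally show ?thesis
      unfolding f_def c_def before_reverse_order[OF \<sigma> \<open>i < n\<close>]
      using x by (intro min_add_min_le sum_nonneg) (auto simp: before_def)
  qed
  have "(\<Sum>\<sigma>\<in>orderings n. f (reverse_order n \<circ> \<sigma>)) = (\<Sum>\<sigma>\<in>orderings n. f \<sigma>)"
    by (rule sum.reindex_bij_witness[where i = "(\<circ>) (reverse_order n)" and j = "(\<circ>) (reverse_order n)"])
       (auto intro: reverse_closed simp: fun_eq_iff reverse_order_involution)
  then have "2 * (\<Sum>\<sigma>\<in>orderings n. f \<sigma>) = (\<Sum>\<sigma>\<in>orderings n. f \<sigma> + f (reverse_order n \<circ> \<sigma>))"
    by (simp add: sum.distrib)
  also have "\<dots> \<le> (\<Sum>\<sigma>\<in>orderings n. 2 * c)"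
    by (rule sum_mono) (rule paired)
  finally have "(\<Sum>\<sigma>\<in>orderings n. f \<sigma>) / card (orderings n) \<le> c"
    using finite_orderings orderings_nonempty by (simp add: divide_le_eq card_gt_0_iff mult.commute)
  then show ?thesis
    using integral_pmf_of_set[OF orderings_nonempty finite_orderings] by (simp add: f_def c_def)
qed

lemma expectation_min_before_le_sold:
  assumes "\<And>j. j < n \<Longrightarrow> ystar (v j) p \<ge> 0" and "i < n"
  shows "(\<integral>\<sigma>. min \<alpha> (\<Sum>j\<in>before n \<sigma> i. ystar (v j) p) \<partial>measure_pmf (pmf_of_set (orderings n)))
         \<le> max \<alpha> (1/2) *
           (\<integral>\<sigma>. (\<Sum>j\<in>{..<n}. buy ystar n v p \<sigma> j) \<partial>measure_pmf (pmf_of_set (orderings n)))"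
proof -
  have "(\<Sum>j\<in>{..<n}. buy ystar n v p \<sigma> j) = min 1 (\<Sum>j<n. ystar (v j) p)"
    if "\<sigma> \<in> orderings n" for \<sigma>
    using sum_buy_eq_min[of \<sigma> n ystar v p] that assms(1) by (simp add: orderings_def)
  then have "AE \<sigma> in measure_pmf (pmf_of_set (orderings n)).
          (\<Sum>j\<in>{..<n}. buy ystar n v p \<sigma> j) = min 1 (\<Sum>j<n. ystar (v j) p)"
    by (simp add: AE_measure_pmf_iff orderings_nonempty finite_orderings)
  then have "(\<integral>\<sigma>. (\<Sum>j\<in>{..<n}. buy ystar n v p \<sigma> j) \<partial>measure_pmf (pmf_of_set (orderings n)))
             = min 1 (\<Sum>j<n. ystar (v j) p)"
    by (subst integral_cong_AE[where g = "\<lambda>_. min 1 (\<Sum>j<n. ystar (v j) p)"]) simp_all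
  then show ?thesis
    using expectation_min_before_le[of n "\<lambda>j. ystar (v j) p" i \<alpha>] assms by simp
qed

lemma PiM_component_in_space:
  assumes "v \<in> space (PiM I F)" "j \<in> I" "sets (F j) = sets M"
  shows "v j \<in> space M"
  using assms sets_eq_imp_space_eq[OF assms(3)] by (auto simp: space_PiM)

lemma measurable_PiM_component_comp:
  assumes "j \<in> I" "sets (F j) = sets M" "g \<in> borel_measurable M"
  shows "(\<lambda>v. g (v j)) \<in> borel_measurable (PiM I F)"
proof -
  have "g \<in> borel_measurable (F j)"
    using assms(3) measurable_cong_sets[OF assms(2) refl] by blast
  moreover have "(\<lambda>v. v j) \<in> PiM I F \<rightarrow>\<^sub>M F j"
    using assms(1) by (rule measurable_component_singleton)
  ultimately show ?thesis
    by (rule measurable_compose[rotated])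
qed

lemma (in pair_sigma_finite) integral_le_fibrewise:
  fixes f g :: "'a \<times> 'b \<Rightarrow> real"
  assumes "integrable (M1 \<Otimes>\<^sub>M M2) f" "integrable (M1 \<Otimes>\<^sub>M M2) g"
    and "\<And>x. x \<in> space M1 \<Longrightarrow> (\<integral>y. f (x, y) \<partial>M2) \<le> c * (\<integral>y. g (x, y) \<partial>M2)"
  shows "integral\<^sup>L (M1 \<Otimes>\<^sub>M M2) f \<le> c * integral\<^sup>L (M1 \<Otimes>\<^sub>M M2) g"
proof -
  have "integral\<^sup>L (M1 \<Otimes>\<^sub>M M2) f = (\<integral>x. (\<integral>y. f (x, y) \<partial>M2) \<partial>M1)"
    using integral_fst'[OF assms(1)] by simp
  also have "\<dots> \<le> (\<integral>x. c * (\<integral>y. g (x, y) \<partial>M2) \<partial>M1)"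
    using integrable_fst'[OF assms(1)] integrable_mult_right[OF integrable_fst'[OF assms(2)]] assms(3)
    by (rule integral_mono)
  also have "\<dots> = c * integral\<^sup>L (M1 \<Otimes>\<^sub>M M2) g"
    using integral_fst'[OF assms(2)] by simp
  finally show ?thesis .
qed

lemma integrable_before_comp:
  fixes h :: "nat set \<Rightarrow> 'a \<Rightarrow> real"
  assumes "prob_space M"
    and meas: "\<And>K. K \<subseteq> {..<n} \<Longrightarrow> h K \<in> borel_measurable M"
    and bound: "\<And>K v. K \<subseteq> {..<n} \<Longrightarrow> v \<in> space M \<Longrightarrow> \<bar>h K v\<bar> \<le> B"
  shows "integrable (M \<Otimes>\<^sub>M measure_pmf P) (\<lambda>(v, \<sigma>). h (before n \<sigma> j) v)"
proof (rule finite_measure.integrable_const_bound)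
  show "finite_measure (M \<Otimes>\<^sub>M measure_pmf P)"
    using assms(1) prob_space_measure_pmf by (intro prob_space.finite_measure prob_space_pair)
  show "AE z in M \<Otimes>\<^sub>M measure_pmf P. norm ((\<lambda>(v, \<sigma>). h (before n \<sigma> j) v) z) \<le> B"
    by (intro AE_I2) (auto simp: space_pair_measure before_def intro!: bound)
  have "(\<lambda>z. h K (fst z)) \<in> borel_measurable (M \<Otimes>\<^sub>M measure_pmf P)"
    if "K \<in> Pow {..<n}" for K
    using that meas by (intro measurable_compose[OF measurable_fst]) auto
  moreover have "(\<lambda>z. before n (snd z) j) \<in> M \<Otimes>\<^sub>M measure_pmf P \<rightarrow>\<^sub>M count_space (Pow {..<n})"
    by (rule measurable_compose[OF measurable_snd]) (auto simp: before_def)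
  ultimately have "(\<lambda>z. h (before n (snd z) j) (fst z)) \<in> borel_measurable (M \<Otimes>\<^sub>M measure_pmf P)"
    by (rule measurable_compose_countable') (simp_all add: countable_finite[of "Pow {..<n}"])
  then show "(\<lambda>(v, \<sigma>). h (before n \<sigma> j) v) \<in> borel_measurable (M \<Otimes>\<^sub>M measure_pmf P)"
    by (simp add: case_prod_beta')
qed

lemma integrable_demand_before_and_sold:
  assumes M: "prob_space M"
    and meas: "\<And>K. K \<subseteq> {..<n} \<Longrightarrow> (\<lambda>v. \<Sum>j\<in>K. ystar (v j) p) \<in> borel_measurable M"
    and range: "\<And>v j. v \<in> space M \<Longrightarrow> j < n \<Longrightarrow> ystar (v j) p \<in> {0..1}"
  shows "integrable (M \<Otimes>\<^sub>M measure_pmf P) (\<lambda>(v, \<sigma>). min \<alpha> (\<Sum>j\<in>before n \<sigma> i. ystar (v j) p))"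
    and "integrable (M \<Otimes>\<^sub>M measure_pmf P) (\<lambda>(v, \<sigma>). \<Sum>j\<in>{..<n}. buy ystar n v p \<sigma> j)"
proof -
  have "\<bar>min \<alpha> (\<Sum>j\<in>K. ystar (v j) p)\<bar> \<le> \<bar>\<alpha>\<bar>" if "v \<in> space M" "K \<subseteq> {..<n}" for v K
  proof -
    have "(\<Sum>j\<in>K. ystar (v j) p) \<ge> 0"
      using range[OF that(1)] that(2) by (intro sum_nonneg) auto
    then show ?thesis
      by (auto simp: min_def)
  qed
  then show "integrable (M \<Otimes>\<^sub>M measure_pmf P) (\<lambda>(v, \<sigma>). min \<alpha> (\<Sum>j\<in>before n \<sigma> i. ystar (v j) p))"
    using M meas by (intro integrable_before_comp[where B = "\<bar>\<alpha>\<bar>"]) auto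
  have "integrable (M \<Otimes>\<^sub>M measure_pmf P) (\<lambda>(v, \<sigma>). buy ystar n v p \<sigma> j)" if "j < n" for j
    unfolding buy_def using M meas[of "{j}"] meas range that
    by (intro integrable_before_comp[where B = 1 and
          h = "\<lambda>K v. min (ystar (v j) p) (max 0 (1 - (\<Sum>l\<in>K. ystar (v l) p)))"])
       (auto intro: min.coboundedI1)
  then have "integrable (M \<Otimes>\<^sub>M measure_pmf P)
               (\<lambda>z. \<Sum>j\<in>{..<n}. (\<lambda>(v, \<sigma>). buy ystar n v p \<sigma> j) z)"
    by (intro Bochner_Integration.integrable_sum) auto
  then show "integrable (M \<Otimes>\<^sub>M measure_pmf P) (\<lambda>(v, \<sigma>). \<Sum>j\<in>{..<n}. buy ystar n v p \<sigma> j)"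
    by (simp add: case_prod_beta')
qed

theorem mainTheorem3:
  fixes n :: nat
    and Mv :: "(real \<Rightarrow> real) measure"
    and F :: "nat \<Rightarrow> (real \<Rightarrow> real) measure"
    and ystar :: "(real \<Rightarrow> real) \<Rightarrow> real \<Rightarrow> real"
    and i :: nat and p \<alpha> :: real
  assumes val: "\<And>v. v \<in> space Mv \<Longrightarrow> valuation v"
    and F_sets: "\<And>j. j < n \<Longrightarrow> sets (F j) = sets Mv"
    and F_prob: "\<And>j. j < n \<Longrightarrow> prob_space (F j)"
    and ystar_range: "\<And>v q. v \<in> space Mv \<Longrightarrow> q > 0 \<Longrightarrow> ystar v q \<in> {0..1}"
    and ystar_max: "\<And>v q z. v \<in> space Mv \<Longrightarrow> q > 0 \<Longrightarrow> z \<in> {0..1} \<Longrightarrow>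
                      v z - q * z \<le> v (ystar v q) - q * ystar v q"
    and ystar_meas: "\<And>q. q > 0 \<Longrightarrow> (\<lambda>v. ystar v q) \<in> borel_measurable Mv"
    and i: "i < n" and p: "p > 0" and \<alpha>: "\<alpha> > 0"
  shows "(\<integral>(v, \<sigma>). min \<alpha> (\<Sum>j\<in>before n \<sigma> i. ystar (v j) p)
            \<partial>(PiM {..<n} F \<Otimes>\<^sub>M measure_pmf (pmf_of_set (orderings n))))
         \<le> max \<alpha> (1/2) *
           (\<integral>(v, \<sigma>). (\<Sum>j\<in>{..<n}. buy ystar n v p \<sigma> j)
            \<partial>(PiM {..<n} F \<Otimes>\<^sub>M measure_pmf (pmf_of_set (orderings n))))"
proof -
  define M where "M = PiM {..<n} F"
  define N where "N = measure_pmf (pmf_of_set (orderings n))"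
  have M: "prob_space M"
    unfolding M_def using F_prob by (intro prob_space_PiM) auto
  interpret M: prob_space M
    by (rule M)
  interpret N: prob_space N
    unfolding N_def by (rule prob_space_measure_pmf)
  interpret MN: pair_prob_space M N ..
  have demand_range: "ystar (v j) p \<in> {0..1}" if "v \<in> space M" "j < n" for v j
    using ystar_range[OF PiM_component_in_space[of v "{..<n}" F j Mv] p] that F_sets
    by (simp add: M_def)
  have demand_meas: "(\<lambda>v. \<Sum>j\<in>K. ystar (v j) p) \<in> borel_measurable M" if "K \<subseteq> {..<n}" for K
    unfolding M_def using that
    by (intro borel_measurable_sum measurable_PiM_component_comp[where M = Mv])
       (auto simp: F_sets ystar_meas[OF p])
  have "(\<integral>\<sigma>. min \<alpha> (\<Sum>j\<in>before n \<sigma> i. ystar (v j) p) \<partial>N)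
        \<le> max \<alpha> (1/2) * (\<integral>\<sigma>. (\<Sum>j\<in>{..<n}. buy ystar n v p \<sigma> j) \<partial>N)"
    if "v \<in> space M" for v
    unfolding N_def using demand_range[OF that] i by (intro expectation_min_before_le_sold) auto
  moreover have "integrable (M \<Otimes>\<^sub>M N) (\<lambda>(v, \<sigma>). min \<alpha> (\<Sum>j\<in>before n \<sigma> i. ystar (v j) p))"
    unfolding N_def using M demand_meas demand_range by (rule integrable_demand_before_and_sold(1))
  moreover have "integrable (M \<Otimes>\<^sub>M N) (\<lambda>(v, \<sigma>). \<Sum>j\<in>{..<n}. buy ystar n v p \<sigma> j)"
    unfolding N_def using M demand_meas demand_range by (rule integrable_demand_before_and_sold(2))
  ultimately show ?thesis
    unfolding M_def[symmetric] N_def[symmetric]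
    by (intro MN.integral_le_fibrewise) auto
qed

end
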